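(* Let $d\in\mathrm{End}^1(E)$ and $\delta\in\mathrm{End}^{-1}(E)$ with $d^2=\delta^2=0$, and assume $[d,\delta]=d\delta+\delta d$ is invertible, so that $d$ and $\delta$ are exact. Then $$\prod_{i=p}^q\det\big([d,\delta]|_{E^i}\big)^{(-1)^i}=1 ,$$ and the ratio of the nonzero elements $\tau(d),\tau(\delta)$ of the even line $\det E$ is $$\tau(d)\otimes\tau(\delta)^{-1}=\prod_{i=p}^q\det\big([d,\delta]|_{E^i}\big)^{(-1)^i\,i} .$$ In particular, if $[d,\delta]=1$ then $\tau(d)=\tau(\delta)$.
   Context: $E=\bigoplus_{i=p}^qE^i$ is a finite-dimensional complex $\mathbb Z$-graded vector space. Determinant lines follow Knudsen–Mumford: $\det V=\Lambda^{\max}V$ with parity $\dim V$, and $\det E=\bigotimes_{i=p}^q(\det E^i)^{(-1)^i}$ (ordered). When a differential is exact, $\det E$ is even. For an exact degree-$1$ differential $d$, $$\tau(d)=\bigotimes_{i=p}^q(d\sigma^{i-1}\wedge\sigma^i)^{(-1)^i},$$ with $\sigma^i$ a nonzero element of $\Lambda^{\max}$ of a complement of $dE^{i-1}$ in $E^i$ ($\sigma^{p-1}=1$). For an exact degree-$(-1)$ differential $\delta$, $$\tau(\delta)=\bigotimes_{i=p}^q(\rho^i\wedge\delta\rho^{i+1})^{(-1)^i},$$ with $\rho^i$ a nonzero element of $\Lambda^{\max}$ of a complement of $\delta E^{i+1}$ in $E^i$ ($\rho^{q+1}=1$). For odd $i$, inverses of wedge products $a\wedge b$ are read as $a^{-1}_{\mathrm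 r}\wedge b^{-1}_{\mathrm l}$ (right, respectively left, graded inverses). Both sections are nonzero and independent of choices. *)

theory Defs
  imports Complex_Main "Jordan_Normal_Form.Determinant"
begin

(* Graded space E = \<Oplus>_{i=p..q} E^i modelled in coordinates: E^i = complex^(n i),
   with n i = 0 outside {p..q}.  d i : E^i \<rightarrow> E^(i+1) is an (n (i+1)) x (n i) matrix,
   \<delta> i : E^i \<rightarrow> E^(i-1) is an (n (i-1)) x (n i) matrix. *)

definition sgnexp :: "int \<Rightarrow> int" where
  "sgnexp i = (if even i then 1 else -1)"

definition col_range :: "complex mat \<Rightarrow> complex vec set" where
  "col_range A = {A *\<^sub>v u | u. u \<in> carrier_vec (dim_col A)}"

definition is_compl_basis :: "complex mat \<Rightarrow> complex mat \<Rightarrow> nat \<Rightarrow> bool" where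
  "is_compl_basis A B m \<longleftrightarrow> dim_row A = m \<and> dim_row B = m \<and>
     (\<forall>v \<in> carrier_vec m. \<exists>!(w, c). w \<in> col_range A \<and> c \<in> carrier_vec (dim_col B)
                                     \<and> v = w + B *\<^sub>v c)"

(* juxtaposition of the columns of A and B: the matrix whose determinant is the
   coefficient of a \<and> b w.r.t. the standard volume element e_1\<and>...\<and>e_m *)
definition cat_cols :: "nat \<Rightarrow> complex mat \<Rightarrow> complex mat \<Rightarrow> complex mat" where
  "cat_cols m A B = mat_of_cols m (cols A @ cols B)"

(* coordinate of tau(d) = \<Otimes>_i (d\<sigma>^(i-1) \<and> \<sigma>^i)^((-1)^i), where \<sigma>^i is the wedge of the
   columns of B i (up to the overall convention sign, which depends only on the ranks
   and is the same for tau(\<delta>)) *)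
definition tau_d :: "(int \<Rightarrow> nat) \<Rightarrow> (int \<Rightarrow> complex mat) \<Rightarrow> (int \<Rightarrow> complex mat)
                      \<Rightarrow> int \<Rightarrow> int \<Rightarrow> complex" where
  "tau_d n d B p q = (\<Prod>i\<in>{p..q}. det (cat_cols (n i) (d (i-1) * B (i-1)) (B i)) powi sgnexp i)"

(* coordinate of tau(\<delta>) = \<Otimes>_i (\<rho>^i \<and> \<delta>\<rho>^(i+1))^((-1)^i) *)
definition tau_delta :: "(int \<Rightarrow> nat) \<Rightarrow> (int \<Rightarrow> complex mat) \<Rightarrow> (int \<Rightarrow> complex mat)
                      \<Rightarrow> int \<Rightarrow> int \<Rightarrow> complex" where
  "tau_delta n \<delta> R p q = (\<Prod>i\<in>{p..q}. det (cat_cols (n i) (R i) (\<delta> (i+1) * R (i+1))) powi sgnexp i)"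

definition comm_dd :: "(int \<Rightarrow> complex mat) \<Rightarrow> (int \<Rightarrow> complex mat) \<Rightarrow> int \<Rightarrow> complex mat" where
  "comm_dd d \<delta> i = d (i-1) * \<delta> i + \<delta> (i+1) * d i"

end

theory Submission
  imports Defs
begin

text \<open>
  Invertibility of \<open>[d,\<delta>]\<close> splits every degree as \<open>E\<^sup>i = im d\<^sub>i\<^sub>-\<^sub>1 \<oplus> im \<delta>\<^sub>i\<^sub>+\<^sub>1\<close>, with
  \<open>im d\<^sub>i\<^sub>-\<^sub>1 = ker d\<^sub>i\<close> and \<open>im \<delta>\<^sub>i\<^sub>+\<^sub>1 = ker \<delta>\<^sub>i\<close>. The images \<open>d\<sigma>\<^sup>i\<^sup>-\<^sup>1\<close> and \<open>\<delta>\<rho>\<^sup>i\<^sup>+\<^sup>1\<close> of the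
  complement bases are bases of the two summands and together form a reference basis of \<open>E\<^sup>i\<close>.
  In it \<open>[d,\<delta>]\<close> is block diagonal: on \<open>im d\<^sub>i\<^sub>-\<^sub>1\<close> it is \<open>d\<delta>\<close>, the composite of
  \<open>\<delta> : im d\<^sub>i\<^sub>-\<^sub>1 \<rightarrow> im \<delta>\<^sub>i\<close> and \<open>d : im \<delta>\<^sub>i \<rightarrow> im d\<^sub>i\<^sub>-\<^sub>1\<close>, with determinant \<open>g\<^sub>i\<close> say;
  on \<open>im \<delta>\<^sub>i\<^sub>+\<^sub>1\<close> it is \<open>\<delta>d\<close>, conjugate to \<open>d\<delta>\<close> on \<open>im d\<^sub>i\<close>. Hence
  \<open>det [d,\<delta>]|\<^bsub>E\<^sup>i\<^esub> = g\<^sub>i g\<^sub>i\<^sub>+\<^sub>1\<close>. Comparing the bases defining \<open>\<tau>(d)\<close> and \<open>\<tau>(\<delta>)\<close> with the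
  reference basis, their factors in degree \<open>i\<close> differ from its determinant by the determinants of
  \<open>d : im \<delta>\<^sub>i\<^sub>+\<^sub>1 \<rightarrow> im d\<^sub>i\<close> and of \<open>\<delta> : im d\<^sub>i\<^sub>-\<^sub>1 \<rightarrow> im \<delta>\<^sub>i\<close> respectively. As all these
  determinants are \<open>1\<close> outside \<open>[p, q]\<close>, the alternating products telescope.
\<close>

definition trivial_kernel :: "'a :: semiring_0 mat \<Rightarrow> bool" where
  "trivial_kernel X \<longleftrightarrow>
     (\<forall>u \<in> carrier_vec (dim_col X). X *\<^sub>v u = 0\<^sub>v (dim_row X) \<longrightarrow> u = 0\<^sub>v (dim_col X))"

lemma trivial_kernelD:
  "trivial_kernel X \<Longrightarrow> X \<in> carrier_mat m k \<Longrightarrow> u \<in> carrier_vec k \<Longrightarrow> X *\<^sub>v u = 0\<^sub>v m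
    \<Longrightarrow> u = 0\<^sub>v k"
  unfolding trivial_kernel_def by auto

lemma zero_mat_mult_vec: "u \<in> carrier_vec k \<Longrightarrow> 0\<^sub>m m k *\<^sub>v u = 0\<^sub>v m"
  by (intro eq_vecI) (auto simp: scalar_prod_def)

lemma mult_mat_zero_vec: "A \<in> carrier_mat m k \<Longrightarrow> A *\<^sub>v 0\<^sub>v k = 0\<^sub>v m"
  by (intro eq_vecI) auto

lemma mult_col_range [intro]:
  "A \<in> carrier_mat m k \<Longrightarrow> x \<in> carrier_vec k \<Longrightarrow> A *\<^sub>v x \<in> col_range A"
  unfolding col_range_def by auto

lemma mem_col_range: "A \<in> carrier_mat m k \<Longrightarrow> v \<in> col_range A \<longleftrightarrow> (\<exists>u \<in> carrier_vec k. v = A *\<^sub>v u)"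
  unfolding col_range_def by auto

lemma col_range_carrier: "A \<in> carrier_mat m k \<Longrightarrow> col_range A \<subseteq> carrier_vec m"
  unfolding col_range_def by auto

lemma zero_in_col_range: "A \<in> carrier_mat m k \<Longrightarrow> 0\<^sub>v m \<in> col_range A"
  using mult_col_range[of A m k "0\<^sub>v k"] by (simp add: mult_mat_zero_vec)

lemma col_in_col_range:
  assumes A: "A \<in> carrier_mat m k" and j: "j < k"
  shows "col A j \<in> col_range A"
proof -
  have "A *\<^sub>v unit_vec k j = col A j"
    using A j by (intro eq_vecI) auto
  then show ?thesis using mult_col_range[OF A, of "unit_vec k j"] by simp
qed

lemma col_range_mult_subset:
  "A \<in> carrier_mat m k \<Longrightarrow> M \<in> carrier_mat k l \<Longrightarrow> col_range (A * M) \<subseteq> col_range A"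
  unfolding col_range_def by force

lemma mult_left_cancel_trivial_kernel:
  fixes X :: "'a :: ring mat"
  assumes X: "X \<in> carrier_mat m a" and inj: "trivial_kernel X"
    and A: "A \<in> carrier_mat a c" and A': "A' \<in> carrier_mat a c" and eq: "X * A = X * A'"
  shows "A = A'"
proof (rule mat_col_eqI)
  fix j assume "j < dim_col A'"
  with A' have j: "j < c" by simp
  have "X *\<^sub>v (col A j - col A' j) = col (X * A) j - col (X * A') j"
    using A A' j by (simp add: mult_minus_distrib_mat_vec[OF X] col_mult2[OF X])
  also have "\<dots> = 0\<^sub>v m"
    using eq X A' j by simp
  finally have "col A j - col A' j = 0\<^sub>v a"
    using trivial_kernelD[OF inj X] A A' j by simp
  then have "\<forall>i<a. (col A j - col A' j) $ i = 0"
    by simp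
  with A A' j show "col A j = col A' j"
    by (intro eq_vecI) auto
qed (use A A' in auto)

lemma factor_through_col_range:
  assumes X: "X \<in> carrier_mat m a" and C: "C \<in> carrier_mat m c"
    and cols: "\<And>j. j < c \<Longrightarrow> col C j \<in> col_range X"
  shows "\<exists>U \<in> carrier_mat a c. C = X * U"
proof -
  have "\<forall>j. \<exists>u. j < c \<longrightarrow> u \<in> carrier_vec a \<and> col C j = X *\<^sub>v u"
    using cols X unfolding col_range_def by auto
  then obtain u where u: "\<And>j. j < c \<Longrightarrow> u j \<in> carrier_vec a \<and> col C j = X *\<^sub>v u j"
    by metis
  define U where "U = mat_of_cols a (map u [0..<c])"
  have U: "U \<in> carrier_mat a c"
    using mat_of_cols_carrier[of a "map u [0..<c]"] unfolding U_def by simp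
  have "C = X * U"
  proof (rule mat_col_eqI)
    fix j assume "j < dim_col (X * U)"
    with U have j: "j < c" by simp
    have "col U j = u j"
      using u[OF j] j unfolding U_def by simp
    then show "col C j = col (X * U) j"
      using col_mult2[OF X U j] u[OF j] by simp
  qed (use X C U in auto)
  with U show ?thesis by blast
qed

lemma factor_through_kernel:
  fixes F :: "complex mat"
  assumes F: "F \<in> carrier_mat k m" and X: "X \<in> carrier_mat m a"
    and M: "M \<in> carrier_mat m c" and N: "N \<in> carrier_mat m c" and FMN: "F * M = F * N"
    and ker: "\<And>v. v \<in> carrier_vec m \<Longrightarrow> F *\<^sub>v v = 0\<^sub>v k \<Longrightarrow> v \<in> col_range X"
  shows "\<exists>U \<in> carrier_mat a c. M = X * U + N"
proof -
  have "\<exists>U \<in> carrier_mat a c. M - N = X * U"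
  proof (rule factor_through_col_range[OF X])
    show "M - N \<in> carrier_mat m c"
      using N by (rule minus_carrier_mat)
    fix j assume j: "j < c"
    have col_diff: "col (M - N) j = col M j - col N j"
      using M N j by (intro eq_vecI) auto
    have "F *\<^sub>v (col M j - col N j) = col (F * M) j - col (F * N) j"
      using M N j by (simp add: mult_minus_distrib_mat_vec[OF F] col_mult2[OF F])
    also have "\<dots> = 0\<^sub>v k"
      using FMN F N j by simp
    finally show "col (M - N) j \<in> col_range X"
      using ker M N j col_diff by simp
  qed
  then obtain U where U: "U \<in> carrier_mat a c" and MN: "M - N = X * U"
    by blast
  have "M = (M - N) + N"
    using M N by (intro eq_matI) auto
  with U MN show ?thesis
    by auto
qed

lemma trace_mult_comm:
  fixes M :: "'a :: comm_semiring_0 mat"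
  assumes M: "M \<in> carrier_mat m k" and N: "N \<in> carrier_mat k m"
  shows "(\<Sum>i<m. (M * N) $$ (i, i)) = (\<Sum>j<k. (N * M) $$ (j, j))"
proof -
  have "(\<Sum>i<m. (M * N) $$ (i, i)) = (\<Sum>i<m. \<Sum>j<k. M $$ (i, j) * N $$ (j, i))"
    using M N by (simp add: scalar_prod_def lessThan_atLeast0)
  also have "\<dots> = (\<Sum>j<k. \<Sum>i<m. N $$ (j, i) * M $$ (i, j))"
    by (subst sum.swap) (simp add: mult.commute)
  also have "\<dots> = (\<Sum>j<k. (N * M) $$ (j, j))"
    using M N by (simp add: scalar_prod_def lessThan_atLeast0)
  finally show ?thesis .
qed

lemma inverse_mats_dim_eq:
  fixes M :: "'a :: {comm_ring_1, ring_char_0} mat"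
  assumes M: "M \<in> carrier_mat m k" and N: "N \<in> carrier_mat k m"
    and MN: "M * N = 1\<^sub>m m" and NM: "N * M = 1\<^sub>m k"
  shows "k = m"
proof -
  have "(of_nat m :: 'a) = of_nat k"
    using trace_mult_comm[OF M N] unfolding MN NM by simp
  then show ?thesis by simp
qed

lemma bij_mat_square:
  fixes M :: "complex mat"
  assumes M: "M \<in> carrier_mat m k"
    and surj: "carrier_vec m \<subseteq> col_range M" and inj: "trivial_kernel M"
  shows "k = m" and "det M \<noteq> 0"
proof -
  obtain N where N: "N \<in> carrier_mat k m" and MN: "1\<^sub>m m = M * N"
    using factor_through_col_range[OF M one_carrier_mat] surj by fastforce
  have "M * (N * M) = M * 1\<^sub>m k"
    using M N by (simp add: MN[symmetric] assoc_mult_mat[symmetric])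
  then have "N * M = 1\<^sub>m k"
    by (rule mult_left_cancel_trivial_kernel[OF M inj, rotated 2]) (use M N in auto)
  then show km: "k = m"
    by (rule inverse_mats_dim_eq[OF M N MN[symmetric]])
  show "det M \<noteq> 0"
    using det_0_iff_vec_prod_zero_field[of M m] M km trivial_kernelD[OF inj M] by auto
qed

lemma cat_cols_carrier [simp]:
  "A \<in> carrier_mat m a \<Longrightarrow> B \<in> carrier_mat m b \<Longrightarrow> cat_cols m A B \<in> carrier_mat m (a + b)"
  unfolding cat_cols_def by auto

lemma cat_cols_four_block:
  assumes A: "A \<in> carrier_mat m a" and B: "B \<in> carrier_mat m b"
  shows "cat_cols m A B = four_block_mat A B (0\<^sub>m 0 a) (0\<^sub>m 0 b)"
  using A B unfolding cat_cols_def by (intro eq_matI) (auto simp: mat_of_cols_index nth_append)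

lemma col_cat_cols:
  assumes A: "A \<in> carrier_mat m a" and B: "B \<in> carrier_mat m b" and j: "j < a + b"
  shows "col (cat_cols m A B) j = (if j < a then col A j else col B (j - a))"
  using A B j unfolding cat_cols_def by (subst col_mat_of_cols) (auto simp: nth_append)

lemma cat_cols_mult_vec:
  assumes A: "A \<in> carrier_mat m a" and B: "B \<in> carrier_mat m b"
    and x: "x \<in> carrier_vec a" and y: "y \<in> carrier_vec b"
  shows "cat_cols m A B *\<^sub>v (x @\<^sub>v y) = A *\<^sub>v x + B *\<^sub>v y"
proof -
  have "cat_cols m A B *\<^sub>v (x @\<^sub>v y) = (A *\<^sub>v x + B *\<^sub>v y) @\<^sub>v (0\<^sub>m 0 a *\<^sub>v x + 0\<^sub>m 0 b *\<^sub>v y)"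
    unfolding cat_cols_four_block[OF A B] by (rule four_block_mat_mult_vec[OF A B _ _ x y]) auto
  also have "\<dots> = A *\<^sub>v x + B *\<^sub>v y"
    using A B by (intro eq_vecI) auto
  finally show ?thesis .
qed

lemma cat_cols_mult_four_block:
  assumes A: "A \<in> carrier_mat m a" and B: "B \<in> carrier_mat m b"
    and A2: "A2 \<in> carrier_mat a k" and B2: "B2 \<in> carrier_mat a l"
    and C2: "C2 \<in> carrier_mat b k" and D2: "D2 \<in> carrier_mat b l"
  shows "cat_cols m A B * four_block_mat A2 B2 C2 D2 = cat_cols m (A * A2 + B * C2) (A * B2 + B * D2)"
proof -
  have "cat_cols m A B * four_block_mat A2 B2 C2 D2 = four_block_mat (A * A2 + B * C2) (A * B2 + B * D2)
      (0\<^sub>m 0 a * A2 + 0\<^sub>m 0 b * C2) (0\<^sub>m 0 a * B2 + 0\<^sub>m 0 b * D2)"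
    unfolding cat_cols_four_block[OF A B] by (rule mult_four_block_mat[OF A B _ _ A2 B2 C2 D2]) auto
  also have "\<dots> = cat_cols m (A * A2 + B * C2) (A * B2 + B * D2)"
    using A B A2 B2 C2 D2 by (subst cat_cols_four_block[of _ m k _ l]) (auto intro!: eq_matI)
  finally show ?thesis .
qed

lemma mult_cat_cols:
  assumes M: "M \<in> carrier_mat k m" and A: "A \<in> carrier_mat m a" and B: "B \<in> carrier_mat m b"
  shows "M * cat_cols m A B = cat_cols k (M * A) (M * B)"
proof -
  have MA: "M * A \<in> carrier_mat k a" and MB: "M * B \<in> carrier_mat k b"
    using M A B by auto
  show ?thesis
  proof (rule mat_col_eqI)
    fix j assume "j < dim_col (cat_cols k (M * A) (M * B))"
    then have j: "j < a + b"
      using cat_cols_carrier[OF MA MB] by simp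
    then show "col (M * cat_cols m A B) j = col (cat_cols k (M * A) (M * B)) j"
      by (simp add: col_mult2[OF M cat_cols_carrier[OF A B] j] col_cat_cols[OF A B j]
          col_cat_cols[OF MA MB j] col_mult2[OF M A] col_mult2[OF M B])
  next
    show "dim_row (M * cat_cols m A B) = dim_row (cat_cols k (M * A) (M * B))"
      using M cat_cols_carrier[OF MA MB] by simp
    show "dim_col (M * cat_cols m A B) = dim_col (cat_cols k (M * A) (M * B))"
      using cat_cols_carrier[OF A B] cat_cols_carrier[OF MA MB] by simp
  qed
qed

lemma cat_cols_bij:
  fixes A B :: "complex mat"
  assumes A: "A \<in> carrier_mat m a" and B: "B \<in> carrier_mat m b"
    and span: "\<And>v. v \<in> carrier_vec m \<Longrightarrow> \<exists>x \<in> carrier_vec a. \<exists>y \<in> carrier_vec b. v = A *\<^sub>v x + B *\<^sub>v y"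
    and indep: "\<And>x y. x \<in> carrier_vec a \<Longrightarrow> y \<in> carrier_vec b \<Longrightarrow> A *\<^sub>v x + B *\<^sub>v y = 0\<^sub>v m
      \<Longrightarrow> x = 0\<^sub>v a \<and> y = 0\<^sub>v b"
  shows "a + b = m" and "det (cat_cols m A B) \<noteq> 0"
proof -
  have C: "cat_cols m A B \<in> carrier_mat m (a + b)"
    using A B by simp
  have "carrier_vec m \<subseteq> col_range (cat_cols m A B)"
  proof
    fix v :: "complex vec" assume "v \<in> carrier_vec m"
    then obtain x y where "x \<in> carrier_vec a" "y \<in> carrier_vec b" "v = A *\<^sub>v x + B *\<^sub>v y"
      using span by blast
    then show "v \<in> col_range (cat_cols m A B)"
      using mult_col_range[OF C, of "x @\<^sub>v y"] cat_cols_mult_vec[OF A B] by auto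
  qed
  moreover have "trivial_kernel (cat_cols m A B)"
    unfolding trivial_kernel_def
  proof (intro ballI impI)
    fix c assume "c \<in> carrier_vec (dim_col (cat_cols m A B))"
      and c0: "cat_cols m A B *\<^sub>v c = 0\<^sub>v (dim_row (cat_cols m A B))"
    then have c: "c \<in> carrier_vec (a + b)"
      using C by simp
    then have c_split: "c = vec_first c a @\<^sub>v vec_last c b"
      by simp
    have "A *\<^sub>v vec_first c a + B *\<^sub>v vec_last c b = cat_cols m A B *\<^sub>v c"
      by (subst (2) c_split) (rule cat_cols_mult_vec[OF A B vec_first_carrier vec_last_carrier, symmetric])
    also have "\<dots> = 0\<^sub>v m"
      using c0 C by simp
    finally have "A *\<^sub>v vec_first c a + B *\<^sub>v vec_last c b = 0\<^sub>v m" .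
    then have "vec_first c a = 0\<^sub>v a" "vec_last c b = 0\<^sub>v b"
      using indep[of "vec_first c a" "vec_last c b"] by simp_all
    with c_split have "c = 0\<^sub>v a @\<^sub>v 0\<^sub>v b"
      by simp
    also have "\<dots> = 0\<^sub>v (dim_col (cat_cols m A B))"
      using C by (intro eq_vecI) auto
    finally show "c = 0\<^sub>v (dim_col (cat_cols m A B))" .
  qed
  ultimately show "a + b = m" and "det (cat_cols m A B) \<noteq> 0"
    using bij_mat_square[OF C] by auto
qed

lemma det_cat_cols_mult_four_block:
  fixes A B :: "complex mat"
  assumes A: "A \<in> carrier_mat m a" and B: "B \<in> carrier_mat m b" and ab: "a + b = m"
    and A2: "A2 \<in> carrier_mat a a" and B2: "B2 \<in> carrier_mat a b"
    and C2: "C2 \<in> carrier_mat b a" and D2: "D2 \<in> carrier_mat b b"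
  shows "det (cat_cols m (A * A2 + B * C2) (A * B2 + B * D2))
    = det (cat_cols m A B) * det (four_block_mat A2 B2 C2 D2)"
proof -
  have "cat_cols m A B \<in> carrier_mat m m"
    using cat_cols_carrier[OF A B] ab by simp
  moreover have "four_block_mat A2 B2 C2 D2 \<in> carrier_mat m m"
    using four_block_carrier_mat[OF A2 D2] ab by simp
  ultimately show ?thesis
    using det_mult cat_cols_mult_four_block[OF A B A2 B2 C2 D2] by metis
qed

lemma Ex1_pair_eq: "\<exists>!(x, y). P x y \<Longrightarrow> P a b \<Longrightarrow> P a' b' \<Longrightarrow> (a, b) = (a', b')"
  by (erule ex1E) auto

lemma compl_basis_unique:
  assumes compl: "is_compl_basis A C m" and C: "C \<in> carrier_mat m l" and v: "v \<in> carrier_vec m"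
  shows "\<exists>!(w, c). w \<in> col_range A \<and> c \<in> carrier_vec l \<and> v = w + C *\<^sub>v c"
proof -
  have "\<forall>v \<in> carrier_vec m. \<exists>!(w, c). w \<in> col_range A \<and> c \<in> carrier_vec (dim_col C) \<and> v = w + C *\<^sub>v c"
    using compl unfolding is_compl_basis_def by (elim conjE)
  then show ?thesis
    using v C by (simp only: carrier_matD(2)[OF C])
qed

lemma compl_basis_decomp:
  "is_compl_basis A C m \<Longrightarrow> C \<in> carrier_mat m l \<Longrightarrow> v \<in> carrier_vec m
    \<Longrightarrow> \<exists>w \<in> col_range A. \<exists>c \<in> carrier_vec l. v = w + C *\<^sub>v c"
  using compl_basis_unique by blast

lemma compl_basis_coeff_zero:
  assumes compl: "is_compl_basis A C m" and C: "C \<in> carrier_mat m l"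
    and w: "w \<in> col_range A" and c: "c \<in> carrier_vec l" and sum: "w + C *\<^sub>v c \<in> col_range A"
  shows "c = 0\<^sub>v l"
proof -
  let ?v = "w + C *\<^sub>v c"
  have "A \<in> carrier_mat m (dim_col A)"
    using compl unfolding is_compl_basis_def by auto
  then have v: "?v \<in> carrier_vec m"
    using col_range_carrier sum by blast
  have "?v = ?v + C *\<^sub>v 0\<^sub>v l"
    using v by (simp only: mult_mat_zero_vec[OF C] right_zero_vec)
  with sum have "?v \<in> col_range A \<and> 0\<^sub>v l \<in> carrier_vec l \<and> ?v = ?v + C *\<^sub>v 0\<^sub>v l"
    by (simp only: zero_carrier_vec simp_thms)
  from Ex1_pair_eq[OF compl_basis_unique[OF compl C v] _ this] w c have "(w, c) = (?v, 0\<^sub>v l)"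
    by blast
  then show ?thesis by simp
qed

lemma compl_basis_image_basis:
  assumes F: "F \<in> carrier_mat k m" and A: "A \<in> carrier_mat m a" and FA: "F * A = 0\<^sub>m k a"
    and compl: "is_compl_basis A C m" and C: "C \<in> carrier_mat m l"
    and ker: "\<And>v. v \<in> carrier_vec m \<Longrightarrow> F *\<^sub>v v = 0\<^sub>v k \<Longrightarrow> v \<in> col_range A"
  shows "col_range (F * C) = col_range F" and "trivial_kernel (F * C)"
proof -
  have F_A: "F *\<^sub>v w = 0\<^sub>v k" if "w \<in> col_range A" for w
  proof -
    from that obtain u where u: "u \<in> carrier_vec a" and "w = A *\<^sub>v u"
      using A unfolding col_range_def by auto
    then have "F *\<^sub>v w = (F * A) *\<^sub>v u"
      using F A by simp
    then show ?thesis
      using FA u by (simp add: zero_mat_mult_vec)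
  qed
  have "col_range F \<subseteq> col_range (F * C)"
  proof
    fix v assume "v \<in> col_range F"
    then obtain x where x: "x \<in> carrier_vec m" and v: "v = F *\<^sub>v x"
      using F unfolding col_range_def by auto
    obtain w c where w: "w \<in> col_range A" and c: "c \<in> carrier_vec l" and x_eq: "x = w + C *\<^sub>v c"
      using compl_basis_decomp[OF compl C x] by blast
    have "w \<in> carrier_vec m"
      using w col_range_carrier[OF A] by blast
    then have "v = F *\<^sub>v w + F *\<^sub>v (C *\<^sub>v c)"
      unfolding v x_eq using C c by (simp add: mult_add_distrib_mat_vec[OF F])
    also have "F *\<^sub>v w = 0\<^sub>v k"
      by (rule F_A[OF w])
    finally have "v = (F * C) *\<^sub>v c"
      using F C c by simp
    with mult_col_range[OF mult_carrier_mat[OF F C] c] show "v \<in> col_range (F * C)"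
      by simp
  qed
  then show "col_range (F * C) = col_range F"
    using col_range_mult_subset[OF F C] by blast
  show "trivial_kernel (F * C)"
    unfolding trivial_kernel_def
  proof (intro ballI impI)
    fix c assume "c \<in> carrier_vec (dim_col (F * C))"
      and "(F * C) *\<^sub>v c = 0\<^sub>v (dim_row (F * C))"
    then have c: "c \<in> carrier_vec l" and "F *\<^sub>v (C *\<^sub>v c) = 0\<^sub>v k"
      using F C by auto
    then have "0\<^sub>v m + C *\<^sub>v c \<in> col_range A"
      using ker C by simp
    then show "c = 0\<^sub>v (dim_col (F * C))"
      using compl_basis_coeff_zero[OF compl C zero_in_col_range[OF A] c] C by simp
  qed
qed

lemma compl_basis_dim:
  assumes A: "A \<in> carrier_mat m a" and compl: "is_compl_basis A C m" and C: "C \<in> carrier_mat m l"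
    and X: "X \<in> carrier_mat m k" and range: "col_range X = col_range A" and inj: "trivial_kernel X"
  shows "k + l = m"
proof (rule cat_cols_bij(1)[OF X C])
  fix v :: "complex vec" assume "v \<in> carrier_vec m"
  then obtain w c where "w \<in> col_range X" "c \<in> carrier_vec l" "v = w + C *\<^sub>v c"
    using compl_basis_decomp[OF compl C] range by blast
  then show "\<exists>x \<in> carrier_vec k. \<exists>y \<in> carrier_vec l. v = X *\<^sub>v x + C *\<^sub>v y"
    using X unfolding col_range_def by auto
next
  fix x y assume x: "x \<in> carrier_vec k" and y: "y \<in> carrier_vec l"
    and sum: "X *\<^sub>v x + C *\<^sub>v y = 0\<^sub>v m"
  have "X *\<^sub>v x \<in> col_range A"
    using mult_col_range[OF X x] range by simp
  then have y0: "y = 0\<^sub>v l"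
    using compl_basis_coeff_zero[OF compl C _ y] zero_in_col_range[OF A] sum by metis
  then have "X *\<^sub>v x = 0\<^sub>v m"
    using sum X x C by (simp add: mult_mat_zero_vec)
  with y0 show "x = 0\<^sub>v k \<and> y = 0\<^sub>v l"
    using trivial_kernelD[OF inj X x] by blast
qed

section \<open>The Hodge decomposition in one degree\<close>

text \<open>
  \<open>D = d\<^sub>i\<^sub>-\<^sub>1\<close> and \<open>T = \<delta>\<^sub>i\<^sub>+\<^sub>1\<close> map into \<open>E\<^sup>i\<close>, \<open>D' = d\<^sub>i\<close> and \<open>T' = \<delta>\<^sub>i\<close> map out of it,
  so that \<open>D * T' + T * D'\<close> is \<open>[d,\<delta>]\<close> on \<open>E\<^sup>i\<close>.
\<close>

locale hodge_degree =
  fixes D T D' T' :: "complex mat" and m k l :: nat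
  assumes D: "D \<in> carrier_mat m k" and T: "T \<in> carrier_mat m l"
    and D': "D' \<in> carrier_mat l m" and T': "T' \<in> carrier_mat k m"
    and D'_D: "D' * D = 0\<^sub>m l k" and T'_T: "T' * T = 0\<^sub>m k l"
    and laplacian_invertible: "det (D * T' + T * D') \<noteq> 0"
begin

lemma swap: "hodge_degree T D T' D' m l k"
proof
  show "det (T * D' + D * T') \<noteq> 0"
    using laplacian_invertible comm_add_mat[of "T * D'" m m "D * T'"] D T D' T' by simp
qed (fact T D T' D' T'_T D'_D)+

lemma laplacian_carrier: "D * T' + T * D' \<in> carrier_mat m m"
  using D T D' T' by simp

lemma laplacian_mult_vec:
  "v \<in> carrier_vec m \<Longrightarrow> (D * T' + T * D') *\<^sub>v v = D *\<^sub>v (T' *\<^sub>v v) + T *\<^sub>v (D' *\<^sub>v v)"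
  using D T D' T' by (simp add: add_mult_distrib_mat_vec[of "D * T'" m m])

lemma image_T_inter_kernel_D':
  assumes y: "y \<in> carrier_vec l" and D'_T: "D' *\<^sub>v (T *\<^sub>v y) = 0\<^sub>v l"
  shows "T *\<^sub>v y = 0\<^sub>v m"
proof -
  have "T' *\<^sub>v (T *\<^sub>v y) = 0\<^sub>v k"
    using T'_T T T' y by (simp add: assoc_mult_mat_vec[symmetric] zero_mat_mult_vec)
  then have "(D * T' + T * D') *\<^sub>v (T *\<^sub>v y) = 0\<^sub>v m"
    using laplacian_mult_vec[of "T *\<^sub>v y"] D'_T D T y by (simp add: mult_mat_zero_vec[OF D] mult_mat_zero_vec[OF T])
  then show ?thesis
    using det_0_iff_vec_prod_zero_field[OF laplacian_carrier] laplacian_invertible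
      mult_mat_vec_carrier[OF T y] by blast
qed

lemma decomp:
  assumes v: "v \<in> carrier_vec m"
  shows "\<exists>x \<in> carrier_vec k. \<exists>y \<in> carrier_vec l. v = D *\<^sub>v x + T *\<^sub>v y"
proof -
  obtain H where H: "H \<in> carrier_mat m m" and "(D * T' + T * D') * H = 1\<^sub>m m"
    using det_non_zero_imp_unit[OF laplacian_carrier laplacian_invertible]
    unfolding Units_def ring_mat_def by auto
  then have "v = (D * T' + T * D') *\<^sub>v (H *\<^sub>v v)"
    using laplacian_carrier v by (simp add: assoc_mult_mat_vec[symmetric])
  then have "v = D *\<^sub>v (T' *\<^sub>v (H *\<^sub>v v)) + T *\<^sub>v (D' *\<^sub>v (H *\<^sub>v v))"
    using laplacian_mult_vec H v by simp
  then show ?thesis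
    using mult_mat_vec_carrier[OF T' mult_mat_vec_carrier[OF H v]]
      mult_mat_vec_carrier[OF D' mult_mat_vec_carrier[OF H v]] by blast
qed

lemma direct:
  assumes x: "x \<in> carrier_vec k" and y: "y \<in> carrier_vec l" and sum: "D *\<^sub>v x + T *\<^sub>v y = 0\<^sub>v m"
  shows "D *\<^sub>v x = 0\<^sub>v m" and "T *\<^sub>v y = 0\<^sub>v m"
proof -
  have "D' *\<^sub>v (D *\<^sub>v x) = 0\<^sub>v l"
    using D'_D D D' x by (simp add: assoc_mult_mat_vec[symmetric] zero_mat_mult_vec)
  moreover have "D' *\<^sub>v (D *\<^sub>v x + T *\<^sub>v y) = D' *\<^sub>v (D *\<^sub>v x) + D' *\<^sub>v (T *\<^sub>v y)"
    using D T x y by (simp add: mult_add_distrib_mat_vec[OF D'])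
  ultimately have "D' *\<^sub>v (T *\<^sub>v y) = 0\<^sub>v l"
    using sum D' T y by (simp add: mult_mat_zero_vec)
  then show Ty: "T *\<^sub>v y = 0\<^sub>v m"
    by (rule image_T_inter_kernel_D'[OF y])
  show "D *\<^sub>v x = 0\<^sub>v m"
    using sum D x by (simp add: Ty)
qed

lemma exact:
  assumes v: "v \<in> carrier_vec m" and D'_v: "D' *\<^sub>v v = 0\<^sub>v l"
  shows "v \<in> col_range D"
proof -
  obtain x y where x: "x \<in> carrier_vec k" and y: "y \<in> carrier_vec l" and v_eq: "v = D *\<^sub>v x + T *\<^sub>v y"
    using decomp[OF v] by blast
  have "D' *\<^sub>v (D *\<^sub>v x) = 0\<^sub>v l"
    using D'_D D D' x by (simp add: assoc_mult_mat_vec[symmetric] zero_mat_mult_vec)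
  moreover have "D' *\<^sub>v v = D' *\<^sub>v (D *\<^sub>v x) + D' *\<^sub>v (T *\<^sub>v y)"
    unfolding v_eq using D T x y by (simp add: mult_add_distrib_mat_vec[OF D'])
  ultimately have "D' *\<^sub>v (T *\<^sub>v y) = 0\<^sub>v l"
    using D'_v D' T y by simp
  then have "v = D *\<^sub>v x"
    using image_T_inter_kernel_D'[OF y] v_eq D x by simp
  then show ?thesis
    using D x by auto
qed

end

section \<open>Telescoping alternating products\<close>

lemma sgnexp_succ: "sgnexp (i + 1) = - sgnexp i"
  by (simp add: sgnexp_def)

lemma sgnexp_pred: "sgnexp (i - 1) = - sgnexp i"
  by (simp add: sgnexp_def)

lemma prod_int_shift:
  fixes f :: "int \<Rightarrow> 'a :: comm_monoid_mult"
  assumes "f p = f (q + 1)"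
  shows "(\<Prod>i\<in>{p..q}. f (i + 1)) = (\<Prod>i\<in>{p..q}. f i)"
proof (cases "p \<le> q")
  case True
  have "(\<Prod>i\<in>{p..q}. f (i + 1)) = (\<Prod>i\<in>{p + 1..q + 1}. f i)"
    by (rule prod.reindex_bij_witness[of _ "\<lambda>i. i - 1" "\<lambda>i. i + 1"]) auto
  also have "{p + 1..q + 1} = insert (q + 1) {p + 1..q}" and "{p..q} = insert p {p + 1..q}"
    using True by auto
  then show ?thesis
    using calculation assms by simp
qed simp

lemma prod_powi_adjacent:
  fixes g :: "int \<Rightarrow> 'a :: field" and e :: "int \<Rightarrow> int"
  assumes nz: "\<And>i. g i \<noteq> 0" and "g p = 1" and "g (q + 1) = 1"
  shows "(\<Prod>i\<in>{p..q}. (g i * g (i + 1)) powi e i) = (\<Prod>i\<in>{p..q}. g i powi (e i + e (i - 1)))"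
proof -
  have "(\<Prod>i\<in>{p..q}. g (i + 1) powi e i) = (\<Prod>i\<in>{p..q}. g i powi e (i - 1))"
    using prod_int_shift[of "\<lambda>i. g i powi e (i - 1)" p q] assms by simp
  then show ?thesis
    by (simp add: power_int_mult_distrib prod.distrib power_int_add nz)
qed

lemma prod_powi_ratio:
  fixes x a b :: "int \<Rightarrow> 'a :: field"
  assumes x: "\<And>i. x i \<noteq> 0" and a: "\<And>i. a i \<noteq> 0" and b: "\<And>i. b i \<noteq> 0"
    and "a p = 1" and "a (q + 1) = 1"
  shows "(\<Prod>i\<in>{p..q}. (x i / a (i + 1)) powi sgnexp i) / (\<Prod>i\<in>{p..q}. (x i / b i) powi sgnexp i)
    = (\<Prod>i\<in>{p..q}. (a i * b i) powi sgnexp i)"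
proof -
  have "(x i / a (i + 1)) powi sgnexp i / (x i / b i) powi sgnexp i
      = b i powi sgnexp i * a (i + 1) powi (- sgnexp i)" for i
    using x[of i] a[of "i + 1"] b[of i]
    by (simp add: power_int_divide_distrib power_int_minus field_simps power_int_not_zero)
  then have "(\<Prod>i\<in>{p..q}. (x i / a (i + 1)) powi sgnexp i) / (\<Prod>i\<in>{p..q}. (x i / b i) powi sgnexp i)
      = (\<Prod>i\<in>{p..q}. b i powi sgnexp i) * (\<Prod>i\<in>{p..q}. a (i + 1) powi (- sgnexp i))"
    by (simp add: prod_dividef[symmetric] prod.distrib)
  also have "(\<Prod>i\<in>{p..q}. a (i + 1) powi (- sgnexp i)) = (\<Prod>i\<in>{p..q}. a (i + 1) powi sgnexp (i + 1))"
    by (simp only: sgnexp_succ)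
  also have "\<dots> = (\<Prod>i\<in>{p..q}. a i powi sgnexp i)"
    by (rule prod_int_shift[of "\<lambda>i. a i powi sgnexp i"]) (simp add: assms)
  finally show ?thesis
    by (simp add: power_int_mult_distrib prod.distrib mult.commute)
qed

section \<open>Torsions of a pair of differentials\<close>

locale hodge_pair =
  fixes n :: "int \<Rightarrow> nat" and p q :: int
    and d \<delta> B R :: "int \<Rightarrow> complex mat"
  assumes n_out: "\<And>i. i \<notin> {p..q} \<Longrightarrow> n i = 0"
    and d_dim: "\<And>i. d i \<in> carrier_mat (n (i+1)) (n i)"
    and \<delta>_dim: "\<And>i. \<delta> i \<in> carrier_mat (n (i-1)) (n i)"
    and dd: "\<And>i. d (i+1) * d i = 0\<^sub>m (n (i+2)) (n i)"
    and \<delta>\<delta>: "\<And>i. \<delta> (i-1) * \<delta> i = 0\<^sub>m (n (i-2)) (n i)"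
    and inv: "\<And>i. det (comm_dd d \<delta> i) \<noteq> 0"
    and B: "\<And>i. is_compl_basis (d (i-1)) (B i) (n i)"
    and R: "\<And>i. is_compl_basis (\<delta> (i+1)) (R i) (n i)"
begin

lemma d_carrier: "d (i - 1) \<in> carrier_mat (n i) (n (i - 1))"
  using d_dim[of "i - 1"] by simp

lemma \<delta>_carrier: "\<delta> (i + 1) \<in> carrier_mat (n i) (n (i + 1))"
  using \<delta>_dim[of "i + 1"] by simp

lemma comm_carrier: "comm_dd d \<delta> i \<in> carrier_mat (n i) (n i)"
  unfolding comm_dd_def using d_carrier d_dim \<delta>_carrier \<delta>_dim by (meson add_carrier_mat mult_carrier_mat)

lemma hodge_d: "hodge_degree (d (i - 1)) (\<delta> (i + 1)) (d i) (\<delta> i) (n i) (n (i - 1)) (n (i + 1))"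
proof
  have "i - 1 + 1 = i" "i - 1 + 2 = i + 1"
    by simp_all
  then show "d i * d (i - 1) = 0\<^sub>m (n (i + 1)) (n (i - 1))"
    using dd[of "i - 1"] by metis
  show "\<delta> i * \<delta> (i + 1) = 0\<^sub>m (n (i - 1)) (n (i + 1))"
    using \<delta>\<delta>[of "i + 1"] by simp
  show "det (d (i - 1) * \<delta> i + \<delta> (i + 1) * d i) \<noteq> 0"
    using inv[of i] by (simp add: comm_dd_def)
qed (fact d_carrier \<delta>_carrier d_dim \<delta>_dim)+

lemma hodge_\<delta>: "hodge_degree (\<delta> (i + 1)) (d (i - 1)) (\<delta> i) (d i) (n i) (n (i + 1)) (n (i - 1))"
  by (rule hodge_degree.swap[OF hodge_d])

lemma kernel_d: "v \<in> carrier_vec (n i) \<Longrightarrow> d i *\<^sub>v v = 0\<^sub>v (n (i + 1)) \<Longrightarrow> v \<in> col_range (d (i - 1))"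
  by (rule hodge_degree.exact[OF hodge_d])

lemma kernel_\<delta>: "v \<in> carrier_vec (n i) \<Longrightarrow> \<delta> i *\<^sub>v v = 0\<^sub>v (n (i - 1)) \<Longrightarrow> v \<in> col_range (\<delta> (i + 1))"
  by (rule hodge_degree.exact[OF hodge_\<delta>])

text \<open>\<open>B i\<close> spans a complement of \<open>ker d\<^sub>i = im d\<^sub>i\<^sub>-\<^sub>1\<close>, so \<open>rank_d i\<close> is the rank of \<open>d\<^sub>i\<close>.\<close>

definition rank_d :: "int \<Rightarrow> nat" where
  "rank_d i = dim_col (B i)"

definition rank_\<delta> :: "int \<Rightarrow> nat" where
  "rank_\<delta> i = dim_col (R i)"

lemma B_carrier: "B i \<in> carrier_mat (n i) (rank_d i)"
  using B[of i] unfolding is_compl_basis_def rank_d_def by auto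

lemma R_carrier: "R i \<in> carrier_mat (n i) (rank_\<delta> i)"
  using R[of i] unfolding is_compl_basis_def rank_\<delta>_def by auto

abbreviation dB :: "int \<Rightarrow> complex mat" where
  "dB i \<equiv> d (i - 1) * B (i - 1)"

abbreviation \<delta>R :: "int \<Rightarrow> complex mat" where
  "\<delta>R i \<equiv> \<delta> (i + 1) * R (i + 1)"

lemma dB_carrier: "dB i \<in> carrier_mat (n i) (rank_d (i - 1))"
  using d_carrier B_carrier by (rule mult_carrier_mat)

lemma \<delta>R_carrier_rank_\<delta>: "\<delta>R i \<in> carrier_mat (n i) (rank_\<delta> (i + 1))"
  using \<delta>_carrier R_carrier by (rule mult_carrier_mat)

lemma dB_basis: "col_range (dB i) = col_range (d (i - 1))" "trivial_kernel (dB i)"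
proof -
  have "d (i - 1) * d (i - 1 - 1) = 0\<^sub>m (n i) (n (i - 1 - 1))"
    using hodge_degree.D'_D[OF hodge_d[of "i - 1"]] by simp
  moreover have "v \<in> col_range (d (i - 1 - 1))"
    if "v \<in> carrier_vec (n (i - 1))" "d (i - 1) *\<^sub>v v = 0\<^sub>v (n i)" for v
    using kernel_d[of v "i - 1"] that by simp
  ultimately show "col_range (dB i) = col_range (d (i - 1))" "trivial_kernel (dB i)"
    using compl_basis_image_basis[OF d_carrier d_carrier _ B B_carrier] by blast+
qed

lemma \<delta>R_basis: "col_range (\<delta>R i) = col_range (\<delta> (i + 1))" "trivial_kernel (\<delta>R i)"
proof -
  have "\<delta> (i + 1) * \<delta> (i + 1 + 1) = 0\<^sub>m (n i) (n (i + 1 + 1))"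
    using hodge_degree.D'_D[OF hodge_\<delta>[of "i + 1"]] by simp
  moreover have "v \<in> col_range (\<delta> (i + 1 + 1))"
    if "v \<in> carrier_vec (n (i + 1))" "\<delta> (i + 1) *\<^sub>v v = 0\<^sub>v (n i)" for v
    using kernel_\<delta>[of v "i + 1"] that by simp
  ultimately show "col_range (\<delta>R i) = col_range (\<delta> (i + 1))" "trivial_kernel (\<delta>R i)"
    using compl_basis_image_basis[OF \<delta>_carrier \<delta>_carrier _ R R_carrier] by blast+
qed

lemma rank_d_sum: "rank_d (i - 1) + rank_d i = n i"
  by (rule compl_basis_dim[OF d_carrier B B_carrier dB_carrier dB_basis])

lemma rank_\<delta>_sum: "rank_\<delta> (i + 1) + rank_\<delta> i = n i"
  by (rule compl_basis_dim[OF \<delta>_carrier R R_carrier \<delta>R_carrier_rank_\<delta> \<delta>R_basis])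

lemma hodge_basis_bij:
  shows "rank_d (i - 1) + rank_\<delta> (i + 1) = n i"
    and "det (cat_cols (n i) (dB i) (\<delta>R i)) \<noteq> 0"
proof -
  note hodge = hodge_d[of i]
  have span: "\<exists>a \<in> carrier_vec (rank_d (i - 1)). \<exists>b \<in> carrier_vec (rank_\<delta> (i + 1)).
      v = dB i *\<^sub>v a + \<delta>R i *\<^sub>v b" if v: "v \<in> carrier_vec (n i)" for v
  proof -
    obtain x y where x: "x \<in> carrier_vec (n (i - 1))" and y: "y \<in> carrier_vec (n (i + 1))"
      and v_eq: "v = d (i - 1) *\<^sub>v x + \<delta> (i + 1) *\<^sub>v y"
      using hodge_degree.decomp[OF hodge v] by blast
    have "d (i - 1) *\<^sub>v x \<in> col_range (dB i)" and "\<delta> (i + 1) *\<^sub>v y \<in> col_range (\<delta>R i)"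
      using mult_col_range[OF d_carrier x] mult_col_range[OF \<delta>_carrier y] dB_basis \<delta>R_basis by auto
    then show ?thesis
      unfolding mem_col_range[OF dB_carrier] mem_col_range[OF \<delta>R_carrier_rank_\<delta>] using v_eq by metis
  qed
  have indep: "a = 0\<^sub>v (rank_d (i - 1)) \<and> b = 0\<^sub>v (rank_\<delta> (i + 1))"
    if a: "a \<in> carrier_vec (rank_d (i - 1))" and b: "b \<in> carrier_vec (rank_\<delta> (i + 1))"
      and sum: "dB i *\<^sub>v a + \<delta>R i *\<^sub>v b = 0\<^sub>v (n i)" for a b
  proof -
    have Ba: "B (i - 1) *\<^sub>v a \<in> carrier_vec (n (i - 1))" and Rb: "R (i + 1) *\<^sub>v b \<in> carrier_vec (n (i + 1))"
      using mult_mat_vec_carrier[OF B_carrier a] mult_mat_vec_carrier[OF R_carrier b] by auto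
    have "d (i - 1) *\<^sub>v (B (i - 1) *\<^sub>v a) + \<delta> (i + 1) *\<^sub>v (R (i + 1) *\<^sub>v b) = 0\<^sub>v (n i)"
      using sum assoc_mult_mat_vec[OF d_carrier B_carrier a] assoc_mult_mat_vec[OF \<delta>_carrier R_carrier b]
      by simp
    from hodge_degree.direct[OF hodge Ba Rb this]
    have "dB i *\<^sub>v a = 0\<^sub>v (n i)" and "\<delta>R i *\<^sub>v b = 0\<^sub>v (n i)"
      using assoc_mult_mat_vec[OF d_carrier B_carrier a] assoc_mult_mat_vec[OF \<delta>_carrier R_carrier b]
      by simp_all
    then show ?thesis
      using trivial_kernelD[OF dB_basis(2) dB_carrier a] trivial_kernelD[OF \<delta>R_basis(2) \<delta>R_carrier_rank_\<delta> b]
      by blast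
  qed
  show "rank_d (i - 1) + rank_\<delta> (i + 1) = n i"
    and "det (cat_cols (n i) (dB i) (\<delta>R i)) \<noteq> 0"
    using cat_cols_bij[OF dB_carrier \<delta>R_carrier_rank_\<delta> span indep] by blast+
qed

lemma rank_\<delta>_eq: "rank_\<delta> i = rank_d (i - 1)"
  using hodge_basis_bij(1)[of i] rank_\<delta>_sum[of i] by simp

lemma \<delta>R_carrier: "\<delta>R i \<in> carrier_mat (n i) (rank_d i)"
  using \<delta>R_carrier_rank_\<delta>[of i] rank_\<delta>_eq[of "i + 1"] by simp

lemma R_carrier_rank_d: "R i \<in> carrier_mat (n i) (rank_d (i - 1))"
  using R_carrier[of i] rank_\<delta>_eq[of i] by simp

lemma hodge_basis_carrier: "cat_cols (n i) (dB i) (\<delta>R i) \<in> carrier_mat (n i) (n i)"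
  using cat_cols_carrier[OF dB_carrier[of i] \<delta>R_carrier[of i]] rank_d_sum[of i] by simp

lemma rank_d_vanishes: "n i = 0 \<Longrightarrow> rank_d (i - 1) = 0 \<and> rank_d i = 0"
  using rank_d_sum[of i] by simp

lemma \<delta>R_pred_carrier: "\<delta> i * R i \<in> carrier_mat (n (i - 1)) (rank_d (i - 1))"
  using \<delta>R_carrier[of "i - 1"] by simp

lemma d_dB: "d i * dB i = 0\<^sub>m (n (i + 1)) (rank_d (i - 1))"
proof -
  have "d i * dB i = (d i * d (i - 1)) * B (i - 1)"
    using assoc_mult_mat[OF d_dim d_carrier B_carrier] by simp
  then show ?thesis
    using hodge_degree.D'_D[OF hodge_d[of i]] B_carrier[of "i - 1"] by simp
qed

lemma \<delta>_\<delta>R: "\<delta> i * \<delta>R i = 0\<^sub>m (n (i - 1)) (rank_d i)"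
proof -
  have "\<delta> i * \<delta>R i = (\<delta> i * \<delta> (i + 1)) * R (i + 1)"
    using assoc_mult_mat[OF \<delta>_dim \<delta>_carrier R_carrier] by simp
  then show ?thesis
    using hodge_degree.D'_D[OF hodge_\<delta>[of i]] R_carrier[of "i + 1"] rank_\<delta>_eq[of "i + 1"] by simp
qed

text \<open>
  The matrices of \<open>d : im \<delta>\<^sub>i \<rightarrow> im d\<^sub>i\<^sub>-\<^sub>1\<close> and \<open>\<delta> : im d\<^sub>i\<^sub>-\<^sub>1 \<rightarrow> im \<delta>\<^sub>i\<close>
  in the bases \<open>\<delta>\<^sub>i R\<^sub>i\<close> and \<open>dB i\<close>.
\<close>

definition Gd :: "int \<Rightarrow> complex mat" where
  "Gd i = (SOME G. G \<in> carrier_mat (rank_d (i - 1)) (rank_d (i - 1)) \<and> d (i - 1) * (\<delta> i * R i) = dB i * G)"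

definition G\<delta> :: "int \<Rightarrow> complex mat" where
  "G\<delta> i = (SOME G. G \<in> carrier_mat (rank_d (i - 1)) (rank_d (i - 1)) \<and> \<delta> i * dB i = (\<delta> i * R i) * G)"

lemma Gd: "Gd i \<in> carrier_mat (rank_d (i - 1)) (rank_d (i - 1))"
  and Gd_eq: "d (i - 1) * (\<delta> i * R i) = dB i * Gd i"
proof -
  have "\<exists>G \<in> carrier_mat (rank_d (i - 1)) (rank_d (i - 1)). d (i - 1) * (\<delta> i * R i) = dB i * G"
  proof (rule factor_through_col_range[OF dB_carrier])
    show "d (i - 1) * (\<delta> i * R i) \<in> carrier_mat (n i) (rank_d (i - 1))"
      using d_carrier \<delta>R_pred_carrier by (rule mult_carrier_mat)
    fix j assume "j < rank_d (i - 1)"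
    then have "col (d (i - 1) * (\<delta> i * R i)) j \<in> col_range (d (i - 1))"
      using col_in_col_range[OF mult_carrier_mat[OF d_carrier \<delta>R_pred_carrier]]
        col_range_mult_subset[OF d_carrier \<delta>R_pred_carrier] by blast
    then show "col (d (i - 1) * (\<delta> i * R i)) j \<in> col_range (dB i)"
      using dB_basis(1) by simp
  qed
  then have "Gd i \<in> carrier_mat (rank_d (i - 1)) (rank_d (i - 1)) \<and> d (i - 1) * (\<delta> i * R i) = dB i * Gd i"
    unfolding Gd_def Bex_def by (rule someI_ex)
  then show "Gd i \<in> carrier_mat (rank_d (i - 1)) (rank_d (i - 1))" "d (i - 1) * (\<delta> i * R i) = dB i * Gd i"
    by simp_all
qed

lemma G\<delta>: "G\<delta> i \<in> carrier_mat (rank_d (i - 1)) (rank_d (i - 1))"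
  and G\<delta>_eq: "\<delta> i * dB i = (\<delta> i * R i) * G\<delta> i"
proof -
  have "\<exists>G \<in> carrier_mat (rank_d (i - 1)) (rank_d (i - 1)). \<delta> i * dB i = (\<delta> i * R i) * G"
  proof (rule factor_through_col_range[OF \<delta>R_pred_carrier])
    show "\<delta> i * dB i \<in> carrier_mat (n (i - 1)) (rank_d (i - 1))"
      using \<delta>_dim dB_carrier by (rule mult_carrier_mat)
    fix j assume "j < rank_d (i - 1)"
    then have "col (\<delta> i * dB i) j \<in> col_range (\<delta> i)"
      using col_in_col_range[OF mult_carrier_mat[OF \<delta>_dim dB_carrier]]
        col_range_mult_subset[OF \<delta>_dim dB_carrier] by blast
    then show "col (\<delta> i * dB i) j \<in> col_range (\<delta> i * R i)"
      using \<delta>R_basis(1)[of "i - 1"] by simp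
  qed
  then have "G\<delta> i \<in> carrier_mat (rank_d (i - 1)) (rank_d (i - 1)) \<and> \<delta> i * dB i = (\<delta> i * R i) * G\<delta> i"
    unfolding G\<delta>_def Bex_def by (rule someI_ex)
  then show "G\<delta> i \<in> carrier_mat (rank_d (i - 1)) (rank_d (i - 1))" "\<delta> i * dB i = (\<delta> i * R i) * G\<delta> i"
    by simp_all
qed

lemma Gd_succ: "Gd (i + 1) \<in> carrier_mat (rank_d i) (rank_d i)"
  and Gd_succ_eq: "d i * \<delta>R i = (d i * B i) * Gd (i + 1)"
  using Gd[of "i + 1"] Gd_eq[of "i + 1"] by simp_all

lemma G\<delta>_succ: "G\<delta> (i + 1) \<in> carrier_mat (rank_d i) (rank_d i)"
  and G\<delta>_succ_eq: "\<delta> (i + 1) * (d i * B i) = \<delta>R i * G\<delta> (i + 1)"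
  using G\<delta>[of "i + 1"] G\<delta>_eq[of "i + 1"] by simp_all

lemma comm_mult_dB: "comm_dd d \<delta> i * dB i = dB i * (Gd i * G\<delta> i)"
proof -
  have "comm_dd d \<delta> i * dB i = d (i - 1) * (\<delta> i * dB i) + \<delta> (i + 1) * (d i * dB i)"
    unfolding comm_dd_def
    by (simp only: add_mult_distrib_mat[OF mult_carrier_mat[OF d_carrier \<delta>_dim] mult_carrier_mat[OF \<delta>_carrier d_dim] dB_carrier]
        assoc_mult_mat[OF d_carrier \<delta>_dim dB_carrier] assoc_mult_mat[OF \<delta>_carrier d_dim dB_carrier])
  also have "\<dots> = (d (i - 1) * (\<delta> i * R i)) * G\<delta> i + \<delta> (i + 1) * 0\<^sub>m (n (i + 1)) (rank_d (i - 1))"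
    by (simp only: G\<delta>_eq d_dB assoc_mult_mat[OF d_carrier \<delta>R_pred_carrier G\<delta>])
  also have "\<dots> = dB i * (Gd i * G\<delta> i)"
    using right_mult_zero_mat[OF \<delta>_carrier[of i]] mult_carrier_mat[OF dB_carrier mult_carrier_mat[OF Gd G\<delta>]]
    by (simp only: Gd_eq assoc_mult_mat[OF dB_carrier Gd G\<delta>] right_add_zero_mat)
  finally show ?thesis .
qed

lemma comm_mult_\<delta>R: "comm_dd d \<delta> i * \<delta>R i = \<delta>R i * (G\<delta> (i + 1) * Gd (i + 1))"
proof -
  have dB_succ: "d i * B i \<in> carrier_mat (n (i + 1)) (rank_d i)"
    using d_dim B_carrier by (rule mult_carrier_mat)
  have "comm_dd d \<delta> i * \<delta>R i = d (i - 1) * (\<delta> i * \<delta>R i) + \<delta> (i + 1) * (d i * \<delta>R i)"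
    unfolding comm_dd_def
    by (simp only: add_mult_distrib_mat[OF mult_carrier_mat[OF d_carrier \<delta>_dim] mult_carrier_mat[OF \<delta>_carrier d_dim] \<delta>R_carrier]
        assoc_mult_mat[OF d_carrier \<delta>_dim \<delta>R_carrier] assoc_mult_mat[OF \<delta>_carrier d_dim \<delta>R_carrier])
  also have "\<dots> = d (i - 1) * 0\<^sub>m (n (i - 1)) (rank_d i) + (\<delta> (i + 1) * (d i * B i)) * Gd (i + 1)"
    by (simp only: \<delta>_\<delta>R Gd_succ_eq assoc_mult_mat[OF \<delta>_carrier dB_succ Gd_succ])
  also have "\<dots> = \<delta>R i * (G\<delta> (i + 1) * Gd (i + 1))"
    using right_mult_zero_mat[OF d_carrier[of i]] mult_carrier_mat[OF \<delta>R_carrier mult_carrier_mat[OF G\<delta>_succ Gd_succ]]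
    by (simp only: G\<delta>_succ_eq assoc_mult_mat[OF \<delta>R_carrier G\<delta>_succ Gd_succ] left_add_zero_mat)
  finally show ?thesis .
qed

definition det_comm_im_d :: "int \<Rightarrow> complex" where
  "det_comm_im_d i = det (Gd i) * det (G\<delta> i)"

lemma det_comm: "det (comm_dd d \<delta> i) = det_comm_im_d i * det_comm_im_d (i + 1)"
proof -
  let ?E = "cat_cols (n i) (dB i) (\<delta>R i)"
  have G: "Gd i * G\<delta> i \<in> carrier_mat (rank_d (i - 1)) (rank_d (i - 1))"
    using Gd G\<delta> by (rule mult_carrier_mat)
  have G_succ: "G\<delta> (i + 1) * Gd (i + 1) \<in> carrier_mat (rank_d i) (rank_d i)"
    using G\<delta>_succ Gd_succ by (rule mult_carrier_mat)
  have "comm_dd d \<delta> i * ?E = cat_cols (n i)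
      (dB i * (Gd i * G\<delta> i) + \<delta>R i * 0\<^sub>m (rank_d i) (rank_d (i - 1)))
      (dB i * 0\<^sub>m (rank_d (i - 1)) (rank_d i) + \<delta>R i * (G\<delta> (i + 1) * Gd (i + 1)))"
    using mult_cat_cols[OF comm_carrier dB_carrier \<delta>R_carrier] comm_mult_dB comm_mult_\<delta>R
      mult_carrier_mat[OF dB_carrier G] mult_carrier_mat[OF \<delta>R_carrier G_succ]
      right_mult_zero_mat[OF dB_carrier] right_mult_zero_mat[OF \<delta>R_carrier]
    by simp
  then have "det (comm_dd d \<delta> i * ?E) = det ?E * det (four_block_mat (Gd i * G\<delta> i)
      (0\<^sub>m (rank_d (i - 1)) (rank_d i)) (0\<^sub>m (rank_d i) (rank_d (i - 1))) (G\<delta> (i + 1) * Gd (i + 1)))"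
    using det_cat_cols_mult_four_block[OF dB_carrier \<delta>R_carrier rank_d_sum G _ _ G_succ] by simp
  also have "\<dots> = det ?E * (det (Gd i * G\<delta> i) * det (G\<delta> (i + 1) * Gd (i + 1)))"
    by (subst det_four_block_mat_upper_right_zero[OF G refl _ G_succ]) simp_all
  also have "\<dots> = det ?E * (det_comm_im_d i * det_comm_im_d (i + 1))"
    unfolding det_comm_im_d_def det_mult[OF Gd G\<delta>] det_mult[OF G\<delta>_succ Gd_succ]
    by (simp add: ac_simps)
  finally show ?thesis
    using det_mult[OF comm_carrier hodge_basis_carrier] hodge_basis_bij(2)[of i] by simp
qed

lemma det_hodge_basis_B:
  "det (cat_cols (n i) (dB i) (\<delta>R i)) = det (cat_cols (n i) (dB i) (B i)) * det (Gd (i + 1))"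
proof -
  have "d i * \<delta>R i = d i * (B i * Gd (i + 1))"
    using Gd_succ_eq assoc_mult_mat[OF d_dim B_carrier Gd_succ] by simp
  moreover have "v \<in> col_range (dB i)" if "v \<in> carrier_vec (n i)" "d i *\<^sub>v v = 0\<^sub>v (n (i + 1))" for v
    using kernel_d[OF that] dB_basis(1) by simp
  ultimately obtain U where U: "U \<in> carrier_mat (rank_d (i - 1)) (rank_d i)"
    and \<delta>R_eq: "\<delta>R i = dB i * U + B i * Gd (i + 1)"
    using factor_through_kernel[OF d_dim dB_carrier \<delta>R_carrier mult_carrier_mat[OF B_carrier Gd_succ]]
    by blast
  have "cat_cols (n i) (dB i) (\<delta>R i) = cat_cols (n i)
      (dB i * 1\<^sub>m (rank_d (i - 1)) + B i * 0\<^sub>m (rank_d i) (rank_d (i - 1))) (dB i * U + B i * Gd (i + 1))"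
    using \<delta>R_eq dB_carrier[of i] B_carrier[of i] right_mult_one_mat[OF dB_carrier[of i]] by simp
  also have "det \<dots> = det (cat_cols (n i) (dB i) (B i))
      * det (four_block_mat (1\<^sub>m (rank_d (i - 1))) U (0\<^sub>m (rank_d i) (rank_d (i - 1))) (Gd (i + 1)))"
    by (rule det_cat_cols_mult_four_block[OF dB_carrier B_carrier rank_d_sum _ U _ Gd_succ]) simp_all
  also have "det (four_block_mat (1\<^sub>m (rank_d (i - 1))) U (0\<^sub>m (rank_d i) (rank_d (i - 1))) (Gd (i + 1)))
      = det (Gd (i + 1))"
    using det_four_block_mat_lower_left_zero[OF one_carrier_mat U refl Gd_succ] by simp
  finally show ?thesis .
qed

lemma det_hodge_basis_R:
  "det (cat_cols (n i) (dB i) (\<delta>R i)) = det (cat_cols (n i) (R i) (\<delta>R i)) * det (G\<delta> i)"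
proof -
  have "\<delta> i * dB i = \<delta> i * (R i * G\<delta> i)"
    using G\<delta>_eq assoc_mult_mat[OF \<delta>_dim R_carrier_rank_d G\<delta>] by simp
  moreover have "v \<in> col_range (\<delta>R i)" if "v \<in> carrier_vec (n i)" "\<delta> i *\<^sub>v v = 0\<^sub>v (n (i - 1))" for v
    using kernel_\<delta>[OF that] \<delta>R_basis(1) by simp
  ultimately obtain V where V: "V \<in> carrier_mat (rank_d i) (rank_d (i - 1))"
    and dB_eq: "dB i = \<delta>R i * V + R i * G\<delta> i"
    using factor_through_kernel[OF \<delta>_dim \<delta>R_carrier dB_carrier mult_carrier_mat[OF R_carrier_rank_d G\<delta>]]
    by blast
  have "cat_cols (n i) (dB i) (\<delta>R i) = cat_cols (n i)
      (R i * G\<delta> i + \<delta>R i * V) (R i * 0\<^sub>m (rank_d (i - 1)) (rank_d i) + \<delta>R i * 1\<^sub>m (rank_d i))"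
    using dB_eq \<delta>R_carrier[of i] R_carrier_rank_d[of i] V G\<delta>[of i] right_mult_one_mat[OF \<delta>R_carrier[of i]]
    by (simp add: comm_add_mat[of "\<delta>R i * V" "n i" "rank_d (i - 1)"])
  also have "det \<dots> = det (cat_cols (n i) (R i) (\<delta>R i))
      * det (four_block_mat (G\<delta> i) (0\<^sub>m (rank_d (i - 1)) (rank_d i)) V (1\<^sub>m (rank_d i)))"
    by (rule det_cat_cols_mult_four_block[OF R_carrier_rank_d \<delta>R_carrier rank_d_sum G\<delta> _ V]) simp_all
  also have "det (four_block_mat (G\<delta> i) (0\<^sub>m (rank_d (i - 1)) (rank_d i)) V (1\<^sub>m (rank_d i))) = det (G\<delta> i)"
    using det_four_block_mat_upper_right_zero[OF G\<delta> refl V one_carrier_mat] by simp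
  finally show ?thesis .
qed

lemma rank_d_boundary: "rank_d (p - 1) = 0" "rank_d q = 0"
  using rank_d_vanishes[of "p - 1"] rank_d_vanishes[of "q + 1"] n_out[of "p - 1"] n_out[of "q + 1"]
  by simp_all

lemma det_Gd_boundary: "det (Gd p) = 1" "det (Gd (q + 1)) = 1"
  using Gd[of p] Gd[of "q + 1"] rank_d_boundary by simp_all

lemma det_comm_im_d_boundary: "det_comm_im_d p = 1" "det_comm_im_d (q + 1) = 1"
  using Gd[of p] G\<delta>[of p] Gd[of "q + 1"] G\<delta>[of "q + 1"] rank_d_boundary
  unfolding det_comm_im_d_def by simp_all

lemma det_Gd_nonzero: "det (Gd i) \<noteq> 0"
  using det_hodge_basis_B[of "i - 1"] hodge_basis_bij(2)[of "i - 1"] by auto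

lemma det_G\<delta>_nonzero: "det (G\<delta> i) \<noteq> 0"
  using det_hodge_basis_R[of i] hodge_basis_bij(2)[of i] by auto

lemma det_comm_im_d_nonzero: "det_comm_im_d i \<noteq> 0"
  unfolding det_comm_im_d_def using det_Gd_nonzero det_G\<delta>_nonzero by simp

lemma tau_d_eq: "tau_d n d B p q
    = (\<Prod>i\<in>{p..q}. (det (cat_cols (n i) (dB i) (\<delta>R i)) / det (Gd (i + 1))) powi sgnexp i)"
  unfolding tau_d_def using det_hodge_basis_B det_Gd_nonzero by simp

lemma tau_delta_eq: "tau_delta n \<delta> R p q
    = (\<Prod>i\<in>{p..q}. (det (cat_cols (n i) (dB i) (\<delta>R i)) / det (G\<delta> i)) powi sgnexp i)"
  unfolding tau_delta_def using det_hodge_basis_R det_G\<delta>_nonzero by simp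

lemma tau_delta_nonzero: "tau_delta n \<delta> R p q \<noteq> 0"
  unfolding tau_delta_eq using hodge_basis_bij(2) det_G\<delta>_nonzero by (simp add: power_int_not_zero)

lemma alternating_det_comm: "(\<Prod>i\<in>{p..q}. det (comm_dd d \<delta> i) powi sgnexp i) = 1"
  using prod_powi_adjacent[OF det_comm_im_d_nonzero det_comm_im_d_boundary, of sgnexp]
  by (simp add: det_comm sgnexp_pred)

lemma torsion_ratio: "tau_d n d B p q / tau_delta n \<delta> R p q
    = (\<Prod>i\<in>{p..q}. det (comm_dd d \<delta> i) powi (sgnexp i * i))"
proof -
  have "tau_d n d B p q / tau_delta n \<delta> R p q = (\<Prod>i\<in>{p..q}. det_comm_im_d i powi sgnexp i)"
    unfolding tau_d_eq tau_delta_eq det_comm_im_d_def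
    by (rule prod_powi_ratio) (use hodge_basis_bij(2) det_Gd_nonzero det_G\<delta>_nonzero det_Gd_boundary in auto)
  also have "\<dots> = (\<Prod>i\<in>{p..q}. det (comm_dd d \<delta> i) powi (sgnexp i * i))"
    using prod_powi_adjacent[OF det_comm_im_d_nonzero det_comm_im_d_boundary, of "\<lambda>i. sgnexp i * i"]
    by (simp add: det_comm sgnexp_pred algebra_simps)
  finally show ?thesis .
qed

end

theorem mainTheorem16:
  fixes n :: "int \<Rightarrow> nat" and p q :: int
    and d \<delta> :: "int \<Rightarrow> complex mat"
    and B R :: "int \<Rightarrow> complex mat"
  assumes n_out: "\<And>i. i \<notin> {p..q} \<Longrightarrow> n i = 0"
    and d_dim: "\<And>i. d i \<in> carrier_mat (n (i+1)) (n i)"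
    and \<delta>_dim: "\<And>i. \<delta> i \<in> carrier_mat (n (i-1)) (n i)"
    and dd: "\<And>i. d (i+1) * d i = 0\<^sub>m (n (i+2)) (n i)"
    and \<delta>\<delta>: "\<And>i. \<delta> (i-1) * \<delta> i = 0\<^sub>m (n (i-2)) (n i)"
    and inv: "\<And>i. det (comm_dd d \<delta> i) \<noteq> 0"
    and B: "\<And>i. is_compl_basis (d (i-1)) (B i) (n i)"
    and R: "\<And>i. is_compl_basis (\<delta> (i+1)) (R i) (n i)"
  shows "(\<Prod>i\<in>{p..q}. det (comm_dd d \<delta> i) powi sgnexp i) = 1
       \<and> tau_d n d B p q / tau_delta n \<delta> R p q
           = (\<Prod>i\<in>{p..q}. det (comm_dd d \<delta> i) powi (sgnexp i * i))
       \<and> ((\<forall>i. comm_dd d \<delta> i = 1\<^sub>m (n i)) \<longrightarrow> tau_d n d B p q = tau_delta n \<delta> R p q)"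
proof -
  interpret hodge_pair n p q d \<delta> B R
    by unfold_locales (fact n_out d_dim \<delta>_dim dd \<delta>\<delta> inv B R)+
  have "tau_d n d B p q = tau_delta n \<delta> R p q" if "\<forall>i. comm_dd d \<delta> i = 1\<^sub>m (n i)"
    using torsion_ratio tau_delta_nonzero that by simp
  then show ?thesis
    using alternating_det_comm torsion_ratio by blast
qed

end
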